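(* Let $\mathcal{H}$ be a complex Hilbert space of finite dimension $n\ge2$, $m\ge 2$, let $\sigma$ be a self-adjoint operator on $\mathcal{H}$ with spectral decomposition $\sigma=\sum_j s_j\Pi_j$ (the $s_j$ pairwise distinct, $\Pi_j$ the orthogonal spectral projectors), and define $\Pi_{\rm sym}=\sum_j\Pi_j^{\otimes m}$. A density operator $\rho$ on $\mathcal{H}^{\otimes m}$ is in single $\sigma$-measurement consensus ($\sigma$SMC) if and only if $\mathrm{Tr}(\Pi_{\rm sym}\rho)=1$, which is equivalent to $\Pi_{\rm sym}\rho\Pi_{\rm sym}=\Pi_{\rm sym}\rho=\rho$.
   Context: For $X$ an operator on $\mathcal{H}$, $X^{(i)}=I^{\otimes(i-1)}\otimes X\otimes I^{\otimes(m-i)}$. $\rho$ is in $\sigma$SMC if $\mathrm{Tr}(\Pi_j^{(k)}\Pi_j^{(\ell)}\rho)=\mathrm{Tr}(\Pi_j^{(\ell)}\rho)$ for all $k,\ell\in\{1,\dots,m\}$ and all $j$. *)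

theory Defs
  imports "Jordan_Normal_Form.Matrix"
begin

text \<open>Operators on H^{(tensor m)} = C^(n^m) are (n^m) x (n^m) complex matrices, where a basis
 index a < n^m encodes the tensor basis vector e_{d_1} (x) ... (x) e_{d_m} with
 d_k = digit n m a k (base-n digits, factor 1 most significant).\<close>

definition mtrace :: "complex mat \<Rightarrow> complex" where
  "mtrace A = (\<Sum>i<dim_row A. A $$ (i, i))"

definition adj :: "complex mat \<Rightarrow> complex mat" where
  "adj A = mat (dim_col A) (dim_row A) (\<lambda>(i, j). cnj (A $$ (j, i)))"

definition self_adjoint :: "nat \<Rightarrow> complex mat \<Rightarrow> bool" where
  "self_adjoint d A \<longleftrightarrow> A \<in> carrier_mat d d \<and> adj A = A"

definition orth_projector :: "nat \<Rightarrow> complex mat \<Rightarrow> bool" where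
  "orth_projector d P \<longleftrightarrow> P \<in> carrier_mat d d \<and> P * P = P \<and> adj P = P"

definition cinner :: "complex vec \<Rightarrow> complex vec \<Rightarrow> complex" where
  "cinner v w = (\<Sum>i<dim_vec v. cnj (v $ i) * w $ i)"

definition positive_semidef :: "nat \<Rightarrow> complex mat \<Rightarrow> bool" where
  "positive_semidef d A \<longleftrightarrow> A \<in> carrier_mat d d \<and>
     (\<forall>v \<in> carrier_vec d. Im (cinner v (A *\<^sub>v v)) = 0 \<and> 0 \<le> Re (cinner v (A *\<^sub>v v)))"

definition density_op :: "nat \<Rightarrow> complex mat \<Rightarrow> bool" where
  "density_op d \<rho> \<longleftrightarrow> positive_semidef d \<rho> \<and> mtrace \<rho> = 1"

definition digit :: "nat \<Rightarrow> nat \<Rightarrow> nat \<Rightarrow> nat \<Rightarrow> nat" where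
  "digit n m a k = (a div n ^ (m - k)) mod n"

text \<open>X^{(i)} = I^{(tensor i-1)} (x) X (x) I^{(tensor m-i)}.\<close>
definition embed_op :: "nat \<Rightarrow> nat \<Rightarrow> nat \<Rightarrow> complex mat \<Rightarrow> complex mat" where
  "embed_op n m i X = mat (n ^ m) (n ^ m) (\<lambda>(a, b).
      X $$ (digit n m a i, digit n m b i) *
      (if \<forall>k \<in> {1..m} - {i}. digit n m a k = digit n m b k then 1 else 0))"

definition tensor_pow :: "nat \<Rightarrow> nat \<Rightarrow> complex mat \<Rightarrow> complex mat" where
  "tensor_pow n m X = mat (n ^ m) (n ^ m) (\<lambda>(a, b).
      \<Prod>k \<in> {1..m}. X $$ (digit n m a k, digit n m b k))"

definition mat_sum :: "nat \<Rightarrow> ('j \<Rightarrow> complex mat) \<Rightarrow> 'j set \<Rightarrow> complex mat" where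
  "mat_sum d f J = mat d d (\<lambda>(a, b). \<Sum>j \<in> J. f j $$ (a, b))"

definition spectral_decomp :: "nat \<Rightarrow> complex mat \<Rightarrow> 'j set \<Rightarrow> ('j \<Rightarrow> real) \<Rightarrow> ('j \<Rightarrow> complex mat) \<Rightarrow> bool" where
  "spectral_decomp n \<sigma> J s P \<longleftrightarrow> finite J \<and> inj_on s J \<and>
     (\<forall>j \<in> J. orth_projector n (P j) \<and> P j \<noteq> 0\<^sub>m n n) \<and>
     (\<forall>j \<in> J. \<forall>k \<in> J. j \<noteq> k \<longrightarrow> P j * P k = 0\<^sub>m n n) \<and>
     mat_sum n P J = 1\<^sub>m n \<and>
     \<sigma> = mat_sum n (\<lambda>j. complex_of_real (s j) \<cdot>\<^sub>m P j) J"

definition Pi_sym :: "nat \<Rightarrow> nat \<Rightarrow> 'j set \<Rightarrow> ('j \<Rightarrow> complex mat) \<Rightarrow> complex mat" where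
  "Pi_sym n m J P = mat_sum (n ^ m) (\<lambda>j. tensor_pow n m (P j)) J"

definition sigma_SMC :: "nat \<Rightarrow> nat \<Rightarrow> 'j set \<Rightarrow> ('j \<Rightarrow> complex mat) \<Rightarrow> complex mat \<Rightarrow> bool" where
  "sigma_SMC n m J P \<rho> \<longleftrightarrow>
     (\<forall>j \<in> J. \<forall>k \<in> {1..m}. \<forall>l \<in> {1..m}.
        mtrace (embed_op n m k (P j) * embed_op n m l (P j) * \<rho>) = mtrace (embed_op n m l (P j) * \<rho>))"

end

theory Submission
  imports Defs "HOL-Library.FuncSet"
begin

text \<open>For an orthogonal projector \<open>Q\<close> and a density operator \<open>\<rho>\<close>, \<open>Tr(Q\<rho>) = 1\<close> means that
  \<open>(1 - Q)\<rho>(1 - Q)\<close>, a positive operator, has trace zero; so it vanishes, and positivity then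
  forces \<open>(1 - Q)\<rho> = 0\<close>, i.e. \<open>Q\<rho> = \<rho> = \<rho>Q\<close>. Since the tensor powers \<open>\<Pi>\<^sub>j\<^sup>\<otimes>\<^sup>m\<close> are mutually
  orthogonal projectors, \<open>\<Pi>_sym\<close> is such a \<open>Q\<close>.
  Writing \<open>E\<^sub>k = \<Pi>\<^sub>j^(k)\<close>, the same argument applied to the projector \<open>E\<^sub>l - E\<^sub>k E\<^sub>l\<close> turns the
  \<open>\<sigma>\<close>SMC condition \<open>Tr(E\<^sub>k E\<^sub>l \<rho>) = Tr(E\<^sub>l \<rho>)\<close> into \<open>E\<^sub>k E\<^sub>l \<rho> = E\<^sub>l \<rho>\<close>. Multiplying in the
  factors one at a time gives \<open>\<Pi>\<^sub>j\<^sup>\<otimes>\<^sup>m \<rho> = E\<^sub>1 \<rho>\<close>, and summing over \<open>j\<close> gives \<open>\<Pi>_sym \<rho> = \<rho>\<close>.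
  Conversely \<open>E\<^sub>l \<Pi>_sym = \<Pi>\<^sub>j\<^sup>\<otimes>\<^sup>m\<close>, so \<open>\<Pi>_sym \<rho> = \<rho>\<close> gives \<open>E\<^sub>k E\<^sub>l \<rho> = E\<^sub>k \<Pi>\<^sub>j\<^sup>\<otimes>\<^sup>m \<rho> = \<Pi>\<^sub>j\<^sup>\<otimes>\<^sup>m \<rho> = E\<^sub>l \<rho>\<close>.\<close>

section \<open>Base-\<open>n\<close> digits\<close>

lemma digit_less: "0 < n \<Longrightarrow> digit n m a k < n"
  unfolding digit_def by simp

lemma mod_power_eq_if_digits_eq:
  fixes a b n :: nat
  assumes "\<And>i. i < r \<Longrightarrow> a div n ^ i mod n = b div n ^ i mod n"
  shows "a mod n ^ r = b mod n ^ r"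
  using assms
proof (induction r)
  case (Suc r)
  have "a mod n ^ Suc r = n ^ r * (a div n ^ r mod n) + a mod n ^ r"
    "b mod n ^ Suc r = n ^ r * (b div n ^ r mod n) + b mod n ^ r"
    by (metis power_Suc2 mod_mult2_eq)+
  with Suc show ?case by simp
qed simp

lemma digits_eq_imp_eq:
  assumes "a < n ^ m" "b < n ^ m" "\<forall>k\<in>{1..m}. digit n m a k = digit n m b k"
  shows "a = b"
proof -
  have "a mod n ^ m = b mod n ^ m"
  proof (rule mod_power_eq_if_digits_eq)
    fix i assume "i < m"
    with assms(3)[rule_format, of "m - i"] show "a div n ^ i mod n = b div n ^ i mod n"
      by (simp add: digit_def)
  qed
  with assms(1,2) show ?thesis by simp
qed

definition digit_tuple :: "nat \<Rightarrow> nat \<Rightarrow> nat \<Rightarrow> nat \<Rightarrow> nat" where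
  "digit_tuple n m a = restrict (digit n m a) {1..m}"

lemma bij_betw_digit_tuple:
  assumes "0 < n"
  shows "bij_betw (digit_tuple n m) {..<n ^ m} (PiE {1..m} (\<lambda>_. {..<n}))"
proof -
  have inj: "inj_on (digit_tuple n m) {..<n ^ m}"
    by (rule inj_onI, rule digits_eq_imp_eq)
       (auto simp: digit_tuple_def restrict_def fun_eq_iff split: if_splits)
  have "digit_tuple n m ` {..<n ^ m} \<subseteq> PiE {1..m} (\<lambda>_. {..<n})"
    using assms by (auto simp: digit_tuple_def digit_less)
  moreover have "card (digit_tuple n m ` {..<n ^ m}) = card (PiE {1..m} (\<lambda>_. {..<n}))"
    using card_image[OF inj] by (simp add: card_PiE)
  ultimately have "digit_tuple n m ` {..<n ^ m} = PiE {1..m} (\<lambda>_. {..<n})"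
    by (intro card_subset_eq) (auto intro: finite_PiE)
  with inj show ?thesis by (simp add: bij_betw_def)
qed

section \<open>Tensor products of \<open>m\<close> operators on \<open>\<complex>\<^sup>n\<close>\<close>

definition tensor_prod :: "nat \<Rightarrow> nat \<Rightarrow> (nat \<Rightarrow> complex mat) \<Rightarrow> complex mat" where
  "tensor_prod n m X = mat (n ^ m) (n ^ m)
     (\<lambda>(a, b). \<Prod>k \<in> {1..m}. X k $$ (digit n m a k, digit n m b k))"

lemma tensor_prod_carrier [simp]: "tensor_prod n m X \<in> carrier_mat (n ^ m) (n ^ m)"
  and dim_row_tensor_prod [simp]: "dim_row (tensor_prod n m X) = n ^ m"
  and dim_col_tensor_prod [simp]: "dim_col (tensor_prod n m X) = n ^ m"
  by (simp_all add: tensor_prod_def)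

lemma index_tensor_prod:
  "a < n ^ m \<Longrightarrow> b < n ^ m \<Longrightarrow>
   tensor_prod n m X $$ (a, b) = (\<Prod>k \<in> {1..m}. X k $$ (digit n m a k, digit n m b k))"
  by (simp add: tensor_prod_def)

lemma tensor_prod_cong: "(\<And>k. k \<in> {1..m} \<Longrightarrow> X k = Y k) \<Longrightarrow> tensor_prod n m X = tensor_prod n m Y"
  unfolding tensor_prod_def by (intro eq_matI) auto

lemma tensor_pow_eq_tensor_prod: "tensor_pow n m X = tensor_prod n m (\<lambda>_. X)"
  by (simp add: tensor_pow_def tensor_prod_def)

lemma tensor_prod_mult:
  assumes n: "0 < n"
    and X: "\<And>k. k \<in> {1..m} \<Longrightarrow> X k \<in> carrier_mat n n"
    and Y: "\<And>k. k \<in> {1..m} \<Longrightarrow> Y k \<in> carrier_mat n n"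
  shows "tensor_prod n m X * tensor_prod n m Y = tensor_prod n m (\<lambda>k. X k * Y k)"
proof (rule eq_matI)
  fix a c assume "a < dim_row (tensor_prod n m (\<lambda>k. X k * Y k))"
    "c < dim_col (tensor_prod n m (\<lambda>k. X k * Y k))"
  then have a: "a < n ^ m" and c: "c < n ^ m" by auto
  define g where "g d = (\<Prod>k\<in>{1..m}. X k $$ (digit n m a k, d k) * Y k $$ (d k, digit n m c k))"
    for d
  have "(tensor_prod n m X * tensor_prod n m Y) $$ (a, c) =
      (\<Sum>b<n ^ m. tensor_prod n m X $$ (a, b) * tensor_prod n m Y $$ (b, c))"
    using a c by (simp add: scalar_prod_def lessThan_atLeast0)
  also have "\<dots> = (\<Sum>b<n ^ m. g (digit_tuple n m b))"
    using a c by (intro sum.cong refl)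
      (simp add: index_tensor_prod g_def digit_tuple_def prod.distrib[symmetric])
  also have "\<dots> = (\<Sum>d\<in>PiE {1..m} (\<lambda>_. {..<n}). g d)"
    by (rule sum.reindex_bij_betw[OF bij_betw_digit_tuple[OF n]])
  also have "\<dots> = (\<Prod>k\<in>{1..m}. \<Sum>x<n. X k $$ (digit n m a k, x) * Y k $$ (x, digit n m c k))"
    unfolding g_def by (rule prod_sum_PiE[symmetric]) auto
  also have "\<dots> = (\<Prod>k\<in>{1..m}. (X k * Y k) $$ (digit n m a k, digit n m c k))"
  proof (intro prod.cong refl)
    fix k assume k: "k \<in> {1..m}"
    from X[OF k] Y[OF k] digit_less[OF n]
    show "(\<Sum>x<n. X k $$ (digit n m a k, x) * Y k $$ (x, digit n m c k)) =
        (X k * Y k) $$ (digit n m a k, digit n m c k)"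
      by (simp add: scalar_prod_def lessThan_atLeast0)
  qed
  also have "\<dots> = tensor_prod n m (\<lambda>k. X k * Y k) $$ (a, c)"
    using a c by (simp add: index_tensor_prod)
  finally show "(tensor_prod n m X * tensor_prod n m Y) $$ (a, c) =
      tensor_prod n m (\<lambda>k. X k * Y k) $$ (a, c)" .
qed auto

lemma tensor_prod_one: "0 < n \<Longrightarrow> tensor_prod n m (\<lambda>_. 1\<^sub>m n) = 1\<^sub>m (n ^ m)"
proof (rule eq_matI)
  fix a b assume n: "0 < n" and "a < dim_row (1\<^sub>m (n ^ m) :: complex mat)"
    "b < dim_col (1\<^sub>m (n ^ m) :: complex mat)"
  then have a: "a < n ^ m" and b: "b < n ^ m" by auto
  have "tensor_prod n m (\<lambda>_. 1\<^sub>m n) $$ (a, b) =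
      (\<Prod>k\<in>{1..m}. if digit n m a k = digit n m b k then 1 else 0)"
    using a b digit_less[OF n] by (auto simp: index_tensor_prod intro!: prod.cong)
  also have "\<dots> = (if a = b then 1 else 0)"
    using digits_eq_imp_eq[OF a b] by (auto intro: prod_zero)
  finally show "tensor_prod n m (\<lambda>_. 1\<^sub>m n) $$ (a, b) = 1\<^sub>m (n ^ m) $$ (a, b)"
    using a b by simp
qed auto

lemma tensor_prod_zero_factor:
  assumes "0 < n" "k \<in> {1..m}" "X k = 0\<^sub>m n n"
  shows "tensor_prod n m X = 0\<^sub>m (n ^ m) (n ^ m)"
  using assms digit_less[OF assms(1)]
  by (intro eq_matI) (auto simp: index_tensor_prod intro!: prod_zero bexI[of _ k])

lemma prod_fun_upd_index:
  fixes k m :: nat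
  assumes "k \<in> {1..m}"
  shows "(\<Prod>i\<in>{1..m}. (X(k := C)) i $$ (f i, g i)) =
    C $$ (f k, g k) * (\<Prod>i\<in>{1..m} - {k}. X i $$ (f i, g i))"
proof -
  have "(\<Prod>i\<in>{1..m}. (X(k := C)) i $$ (f i, g i)) =
      (X(k := C)) k $$ (f k, g k) * (\<Prod>i\<in>{1..m} - {k}. (X(k := C)) i $$ (f i, g i))"
    by (rule prod.remove[OF finite_atLeastAtMost assms])
  also have "(\<Prod>i\<in>{1..m} - {k}. (X(k := C)) i $$ (f i, g i)) =
      (\<Prod>i\<in>{1..m} - {k}. X i $$ (f i, g i))"
    by (intro prod.cong) auto
  finally show ?thesis by simp
qed

lemma tensor_prod_fun_upd_diff:
  assumes n: "0 < n" and k: "k \<in> {1..m}"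
    and "A \<in> carrier_mat n n" "B \<in> carrier_mat n n"
  shows "tensor_prod n m (X(k := A)) - tensor_prod n m (X(k := B)) = tensor_prod n m (X(k := A - B))"
proof (rule eq_matI)
  fix a b assume "a < dim_row (tensor_prod n m (X(k := A - B)))"
    "b < dim_col (tensor_prod n m (X(k := A - B)))"
  then have a: "a < n ^ m" and b: "b < n ^ m" by auto
  have "(tensor_prod n m (X(k := A)) - tensor_prod n m (X(k := B))) $$ (a, b) =
      tensor_prod n m (X(k := A)) $$ (a, b) - tensor_prod n m (X(k := B)) $$ (a, b)"
    using a b by simp
  also have "\<dots> = (A $$ (digit n m a k, digit n m b k) - B $$ (digit n m a k, digit n m b k)) *
      (\<Prod>i\<in>{1..m} - {k}. X i $$ (digit n m a i, digit n m b i))"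
    unfolding index_tensor_prod[OF a b] prod_fun_upd_index[OF k] by (simp add: algebra_simps)
  also have "\<dots> = tensor_prod n m (X(k := A - B)) $$ (a, b)"
    unfolding index_tensor_prod[OF a b] prod_fun_upd_index[OF k] using assms digit_less[OF n] by simp
  finally show "(tensor_prod n m (X(k := A)) - tensor_prod n m (X(k := B))) $$ (a, b) =
      tensor_prod n m (X(k := A - B)) $$ (a, b)" .
qed auto

lemma embed_op_eq_tensor_prod:
  assumes n: "0 < n" and k: "k \<in> {1..m}"
  shows "embed_op n m k X = tensor_prod n m (\<lambda>i. if i = k then X else 1\<^sub>m n)"
proof (rule eq_matI)
  fix a b assume "a < dim_row (tensor_prod n m (\<lambda>i. if i = k then X else 1\<^sub>m n))"
    "b < dim_col (tensor_prod n m (\<lambda>i. if i = k then X else 1\<^sub>m n))"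
  then have a: "a < n ^ m" and b: "b < n ^ m" by auto
  have factors: "(\<lambda>i. if i = k then X else 1\<^sub>m n) = (\<lambda>_. 1\<^sub>m n)(k := X)" by auto
  have "tensor_prod n m (\<lambda>i. if i = k then X else 1\<^sub>m n) $$ (a, b) =
      X $$ (digit n m a k, digit n m b k) *
      (\<Prod>i\<in>{1..m} - {k}. (1\<^sub>m n :: complex mat) $$ (digit n m a i, digit n m b i))"
    unfolding index_tensor_prod[OF a b] factors prod_fun_upd_index[OF k] ..
  also have "(\<Prod>i\<in>{1..m} - {k}. (1\<^sub>m n :: complex mat) $$ (digit n m a i, digit n m b i)) =
      (\<Prod>i\<in>{1..m} - {k}. if digit n m a i = digit n m b i then 1 else 0)"
    using digit_less[OF n] by (intro prod.cong) auto
  also have "(\<Prod>i\<in>{1..m} - {k}. if digit n m a i = digit n m b i then 1 else 0 :: complex) =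
      (if \<forall>i\<in>{1..m} - {k}. digit n m a i = digit n m b i then 1 else 0)"
    by (auto intro: prod_zero)
  finally show "embed_op n m k X $$ (a, b) =
      tensor_prod n m (\<lambda>i. if i = k then X else 1\<^sub>m n) $$ (a, b)"
    using a b by (simp add: embed_op_def)
qed (auto simp: embed_op_def)

lemma dim_row_adj [simp]: "dim_row (adj A) = dim_col A"
  and dim_col_adj [simp]: "dim_col (adj A) = dim_row A"
  by (simp_all add: adj_def)

lemma index_adj: "i < dim_col A \<Longrightarrow> j < dim_row A \<Longrightarrow> adj A $$ (i, j) = cnj (A $$ (j, i))"
  by (simp add: adj_def)

lemma adj_tensor_prod:
  assumes n: "0 < n" and X: "\<And>k. k \<in> {1..m} \<Longrightarrow> X k \<in> carrier_mat n n"
  shows "adj (tensor_prod n m X) = tensor_prod n m (\<lambda>k. adj (X k))"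
proof (rule eq_matI)
  fix a b assume "a < dim_row (tensor_prod n m (\<lambda>k. adj (X k)))"
    "b < dim_col (tensor_prod n m (\<lambda>k. adj (X k)))"
  then have a: "a < n ^ m" and b: "b < n ^ m" by auto
  have "adj (tensor_prod n m X) $$ (a, b) =
      (\<Prod>k\<in>{1..m}. cnj (X k $$ (digit n m b k, digit n m a k)))"
    using a b by (simp add: index_adj index_tensor_prod)
  also have "\<dots> = tensor_prod n m (\<lambda>k. adj (X k)) $$ (a, b)"
    unfolding index_tensor_prod[OF a b]
  proof (intro prod.cong refl)
    fix k assume "k \<in> {1..m}"
    with X have "dim_row (X k) = n" "dim_col (X k) = n" by auto
    with digit_less[OF n]
    show "cnj (X k $$ (digit n m b k, digit n m a k)) = adj (X k) $$ (digit n m a k, digit n m b k)"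
      by (simp add: index_adj)
  qed
  finally show "adj (tensor_prod n m X) $$ (a, b) = tensor_prod n m (\<lambda>k. adj (X k)) $$ (a, b)" .
qed auto

lemma orth_projector_tensor_prod:
  assumes n: "0 < n" and X: "\<And>k. k \<in> {1..m} \<Longrightarrow> orth_projector n (X k)"
  shows "orth_projector (n ^ m) (tensor_prod n m X)"
proof -
  have carrier: "X k \<in> carrier_mat n n" if "k \<in> {1..m}" for k
    using X[OF that] by (simp add: orth_projector_def)
  have "tensor_prod n m X * tensor_prod n m X = tensor_prod n m (\<lambda>k. X k * X k)"
    by (rule tensor_prod_mult[OF n carrier carrier])
  also have "\<dots> = tensor_prod n m X"
    using X by (intro tensor_prod_cong) (simp add: orth_projector_def)
  finally have "tensor_prod n m X * tensor_prod n m X = tensor_prod n m X" .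
  moreover have "adj (tensor_prod n m X) = tensor_prod n m (\<lambda>k. adj (X k))"
    by (rule adj_tensor_prod[OF n carrier])
  moreover have "\<dots> = tensor_prod n m X"
    using X by (intro tensor_prod_cong) (simp add: orth_projector_def)
  ultimately show ?thesis by (simp add: orth_projector_def)
qed

lemma mat_sum_carrier [simp]: "mat_sum N f J \<in> carrier_mat N N"
  and dim_row_mat_sum [simp]: "dim_row (mat_sum N f J) = N"
  and dim_col_mat_sum [simp]: "dim_col (mat_sum N f J) = N"
  by (simp_all add: mat_sum_def)

lemma index_mat_sum: "a < N \<Longrightarrow> b < N \<Longrightarrow> mat_sum N f J $$ (a, b) = (\<Sum>j\<in>J. f j $$ (a, b))"
  by (simp add: mat_sum_def)

lemma mat_sum_cong: "(\<And>j. j \<in> J \<Longrightarrow> f j = g j) \<Longrightarrow> mat_sum N f J = mat_sum N g J"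
  unfolding mat_sum_def by (intro eq_matI) auto

lemma mat_sum_mult_right:
  assumes f: "\<And>j. j \<in> J \<Longrightarrow> f j \<in> carrier_mat N N" and B: "B \<in> carrier_mat N N"
  shows "mat_sum N f J * B = mat_sum N (\<lambda>j. f j * B) J"
proof (rule eq_matI)
  fix a c assume "a < dim_row (mat_sum N (\<lambda>j. f j * B) J)" "c < dim_col (mat_sum N (\<lambda>j. f j * B) J)"
  then have a: "a < N" and c: "c < N" by auto
  have dims: "dim_row (f j) = N" "dim_col (f j) = N" if "j \<in> J" for j
    using f[OF that] by auto
  have "(mat_sum N f J * B) $$ (a, c) = (\<Sum>b<N. (\<Sum>j\<in>J. f j $$ (a, b)) * B $$ (b, c))"
    using a c B by (simp add: scalar_prod_def lessThan_atLeast0 index_mat_sum)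
  also have "\<dots> = (\<Sum>j\<in>J. \<Sum>b<N. f j $$ (a, b) * B $$ (b, c))"
    by (simp add: sum_distrib_right sum.swap[of _ J])
  also have "\<dots> = mat_sum N (\<lambda>j. f j * B) J $$ (a, c)"
    using a c B dims by (auto simp: scalar_prod_def lessThan_atLeast0 index_mat_sum intro!: sum.cong)
  finally show "(mat_sum N f J * B) $$ (a, c) = mat_sum N (\<lambda>j. f j * B) J $$ (a, c)" .
qed (use B in auto)

lemma mat_sum_mult_left:
  assumes f: "\<And>j. j \<in> J \<Longrightarrow> f j \<in> carrier_mat N N" and A: "A \<in> carrier_mat N N"
  shows "A * mat_sum N f J = mat_sum N (\<lambda>j. A * f j) J"
proof (rule eq_matI)
  fix a c assume "a < dim_row (mat_sum N (\<lambda>j. A * f j) J)" "c < dim_col (mat_sum N (\<lambda>j. A * f j) J)"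
  then have a: "a < N" and c: "c < N" by auto
  have dims: "dim_row (f j) = N" "dim_col (f j) = N" if "j \<in> J" for j
    using f[OF that] by auto
  have "(A * mat_sum N f J) $$ (a, c) = (\<Sum>b<N. A $$ (a, b) * (\<Sum>j\<in>J. f j $$ (b, c)))"
    using a c A by (simp add: scalar_prod_def lessThan_atLeast0 index_mat_sum)
  also have "\<dots> = (\<Sum>j\<in>J. \<Sum>b<N. A $$ (a, b) * f j $$ (b, c))"
    by (simp add: sum_distrib_left sum.swap[of _ J])
  also have "\<dots> = mat_sum N (\<lambda>j. A * f j) J $$ (a, c)"
    using a c A dims by (auto simp: scalar_prod_def lessThan_atLeast0 index_mat_sum intro!: sum.cong)
  finally show "(A * mat_sum N f J) $$ (a, c) = mat_sum N (\<lambda>j. A * f j) J $$ (a, c)" .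
qed (use A in auto)

lemma mat_sum_delta:
  assumes "finite J" "i \<in> J" "A \<in> carrier_mat N N"
  shows "mat_sum N (\<lambda>j. if j = i then A else 0\<^sub>m N N) J = A"
  using assms unfolding mat_sum_def
  by (intro eq_matI) (auto simp: if_distrib[of "\<lambda>X. X $$ _"] cong: if_cong)

lemma embed_op_carrier [simp]: "embed_op n m k X \<in> carrier_mat (n ^ m) (n ^ m)"
  by (simp add: embed_op_def)

lemma tensor_pow_carrier [simp]: "tensor_pow n m X \<in> carrier_mat (n ^ m) (n ^ m)"
  by (simp add: tensor_pow_def)

lemma mat_sum_embed_op:
  assumes "0 < n"
  shows "mat_sum (n ^ m) (\<lambda>j. embed_op n m k (X j)) J = embed_op n m k (mat_sum n X J)"
  using digit_less[OF assms]
  by (intro eq_matI) (auto simp: index_mat_sum embed_op_def sum_distrib_right)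

lemma embed_op_one:
  assumes "0 < n" "k \<in> {1..m}"
  shows "embed_op n m k (1\<^sub>m n) = 1\<^sub>m (n ^ m)"
proof -
  have "embed_op n m k (1\<^sub>m n) = tensor_prod n m (\<lambda>_. 1\<^sub>m n)"
    using embed_op_eq_tensor_prod[OF assms] by (simp cong: tensor_prod_cong)
  with tensor_prod_one[OF assms(1)] show ?thesis by simp
qed

lemma adj_mat_sum:
  assumes "\<And>j. j \<in> J \<Longrightarrow> f j \<in> carrier_mat N N"
  shows "adj (mat_sum N f J) = mat_sum N (\<lambda>j. adj (f j)) J"
proof -
  have "dim_row (f j) = N" "dim_col (f j) = N" if "j \<in> J" for j
    using assms[OF that] by auto
  then show ?thesis unfolding mat_sum_def by (intro eq_matI) (auto simp: index_adj intro!: sum.cong)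
qed

lemma adj_minus:
  assumes "A \<in> carrier_mat N N" "B \<in> carrier_mat N N"
  shows "adj (A - B) = adj A - adj B"
  using assms by (intro eq_matI) (auto simp: index_adj)

lemma adj_one [simp]: "adj (1\<^sub>m N) = 1\<^sub>m N"
  by (intro eq_matI) (auto simp: index_adj)

lemma index_self_adjoint:
  assumes "A \<in> carrier_mat N N" "adj A = A" "a < N" "b < N"
  shows "A $$ (a, b) = cnj (A $$ (b, a))"
  using assms index_adj[of a A b] by simp

lemma mtrace_minus:
  assumes "A \<in> carrier_mat N N" "B \<in> carrier_mat N N"
  shows "mtrace (A - B) = mtrace A - mtrace B"
  using assms by (simp add: mtrace_def sum_subtractf)

lemma mtrace_mult_commute:
  assumes "A \<in> carrier_mat N N" "B \<in> carrier_mat N N"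
  shows "mtrace (A * B) = mtrace (B * A)"
proof -
  have "mtrace (A * B) = (\<Sum>i<N. \<Sum>j<N. A $$ (i, j) * B $$ (j, i))"
    using assms by (simp add: mtrace_def scalar_prod_def lessThan_atLeast0)
  also have "\<dots> = (\<Sum>j<N. \<Sum>i<N. B $$ (j, i) * A $$ (i, j))"
    by (subst sum.swap) (simp add: mult.commute)
  also have "\<dots> = mtrace (B * A)"
    using assms by (simp add: mtrace_def scalar_prod_def lessThan_atLeast0)
  finally show ?thesis .
qed

lemma minus_mat_eq_zero_imp_eq:
  fixes A B :: "'a :: ab_group_add mat"
  assumes "A \<in> carrier_mat N N" "B \<in> carrier_mat N N" "A - B = 0\<^sub>m N N"
  shows "A = B"
proof (rule eq_matI)
  fix i j assume "i < dim_row B" "j < dim_col B"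
  with assms have ij: "i < N" "j < N" by auto
  with assms have "(A - B) $$ (i, j) = 0" by simp
  moreover have "(A - B) $$ (i, j) = A $$ (i, j) - B $$ (i, j)"
    using assms ij by (intro index_minus_mat) auto
  ultimately show "A $$ (i, j) = B $$ (i, j)" by simp
qed (use assms in auto)

lemma orth_projector_one_minus:
  assumes "orth_projector N Q"
  shows "orth_projector N (1\<^sub>m N - Q)"
proof -
  have Q: "Q \<in> carrier_mat N N" and idem: "Q * Q = Q" and adj: "adj Q = Q"
    using assms by (auto simp: orth_projector_def)
  have "(1\<^sub>m N - Q) * (1\<^sub>m N - Q) = 1\<^sub>m N * (1\<^sub>m N - Q) - Q * (1\<^sub>m N - Q)"
    using Q by (intro minus_mult_distrib_mat[of _ N N]) auto
  also have "Q * (1\<^sub>m N - Q) = Q * 1\<^sub>m N - Q * Q"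
    using Q by (intro mult_minus_distrib_mat[of _ N N]) auto
  also have "\<dots> = 0\<^sub>m N N" using Q idem by simp
  finally have "(1\<^sub>m N - Q) * (1\<^sub>m N - Q) = 1\<^sub>m N - Q"
    using Q by (intro eq_matI) auto
  moreover have "adj (1\<^sub>m N - Q) = 1\<^sub>m N - Q"
    using Q adj by (simp add: adj_minus[of _ N])
  ultimately show ?thesis using Q by (simp add: orth_projector_def minus_carrier_mat)
qed

section \<open>Positive semidefinite operators and orthogonal projectors\<close>

lemma nonneg_linear_plus_quadratic_imp_zero:
  fixes a b :: real
  assumes "\<And>x. 0 \<le> a * x + b * x\<^sup>2"
  shows "a = 0"
proof (rule ccontr)
  assume a: "a \<noteq> 0"
  define c where "c = \<bar>b\<bar> + 1"
  have c: "0 < c" "b < c" unfolding c_def by auto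
  have "a * (- a / c) + b * (- a / c)\<^sup>2 = a\<^sup>2 / c\<^sup>2 * (b - c)"
    using c by (simp add: field_simps power2_eq_square)
  also have "\<dots> < 0" using a c by (intro mult_pos_neg) auto
  finally show False using assms[of "- a / c"] by simp
qed

lemma cinner_mult_mat_vec:
  assumes "x \<in> carrier_vec N" "y \<in> carrier_vec N" "A \<in> carrier_mat N N"
  shows "cinner x (A *\<^sub>v y) = (\<Sum>i<N. \<Sum>a<N. cnj (x $ i) * A $$ (i, a) * y $ a)"
  using assms unfolding cinner_def
  by (auto simp: scalar_prod_def lessThan_atLeast0 sum_distrib_left mult.assoc intro!: sum.cong)

lemma cinner_unit_vec:
  assumes "i < N" "y \<in> carrier_vec N"
  shows "cinner (unit_vec N i) y = y $ i"
proof -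
  have "cinner (unit_vec N i) y = (\<Sum>k<N. if k = i then y $ k else 0)"
    unfolding cinner_def using assms by (intro sum.cong) auto
  also have "\<dots> = y $ i" using assms by simp
  finally show ?thesis .
qed

text \<open>Expanding \<open>\<langle>v + t w, \<rho> (v + t w)\<rangle> \<ge> 0\<close> for real and for imaginary \<open>t\<close> forces the
  cross terms to vanish.\<close>

lemma positive_semidef_cinner_zero:
  assumes psd: "positive_semidef N \<rho>" and v: "v \<in> carrier_vec N" and w: "w \<in> carrier_vec N"
    and zero: "cinner v (\<rho> *\<^sub>v v) = 0"
  shows "cinner w (\<rho> *\<^sub>v v) = 0" and "cinner v (\<rho> *\<^sub>v w) = 0"
proof -
  have \<rho>: "\<rho> \<in> carrier_mat N N" using psd by (simp add: positive_semidef_def)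
  define S where "S x y = (\<Sum>i<N. \<Sum>a<N. cnj (x $ i) * \<rho> $$ (i, a) * y $ a)" for x y
  define \<alpha> where "\<alpha> = S v w"
  define \<beta> where "\<beta> = S w v"
  define \<gamma> where "\<gamma> = S w w"
  have form: "Im (t * \<alpha> + cnj t * \<beta> + cnj t * t * \<gamma>) = 0 \<and>
      0 \<le> Re (t * \<alpha> + cnj t * \<beta> + cnj t * t * \<gamma>)" for t
  proof -
    define u where "u = vec N (\<lambda>i. v $ i + t * w $ i)"
    have u: "u \<in> carrier_vec N" by (simp add: u_def)
    have "cinner u (\<rho> *\<^sub>v u) = S u u" using cinner_mult_mat_vec[OF u u \<rho>] by (simp add: S_def)
    also have "S u u = S v v + t * S v w + cnj t * S w v + cnj t * t * S w w"
      unfolding S_def u_def by (simp add: sum.distrib sum_distrib_left algebra_simps)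
    also have "S v v = 0" using zero cinner_mult_mat_vec[OF v v \<rho>] by (simp add: S_def)
    finally have "cinner u (\<rho> *\<^sub>v u) = t * \<alpha> + cnj t * \<beta> + cnj t * t * \<gamma>"
      by (simp add: \<alpha>_def \<beta>_def \<gamma>_def)
    then show ?thesis using psd u by (auto simp: positive_semidef_def)
  qed
  have "Im \<gamma> = 0" using form[of 1] form[of "-1"] by simp
  have "Re (\<alpha> + \<beta>) = 0"
    by (rule nonneg_linear_plus_quadratic_imp_zero[where b = "Re \<gamma>"])
      (use form[of "complex_of_real _"] in \<open>simp add: power2_eq_square algebra_simps\<close>)
  moreover have "Im (\<alpha> + \<beta>) = 0" using form[of 1] \<open>Im \<gamma> = 0\<close> by simp
  moreover have "- Im (\<alpha> - \<beta>) = 0"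
    by (rule nonneg_linear_plus_quadratic_imp_zero[where b = "Re \<gamma>"])
      (use form[of "\<i> * complex_of_real _"] in \<open>simp add: power2_eq_square algebra_simps\<close>)
  moreover have "Re (\<alpha> - \<beta>) = 0" using form[of "\<i>"] \<open>Im \<gamma> = 0\<close> by (simp add: algebra_simps)
  ultimately have "\<alpha> = 0" "\<beta> = 0" by (auto simp: complex_eq_iff)
  then show "cinner w (\<rho> *\<^sub>v v) = 0" and "cinner v (\<rho> *\<^sub>v w) = 0"
    using cinner_mult_mat_vec[OF w v \<rho>] cinner_mult_mat_vec[OF v w \<rho>]
    by (simp_all add: S_def \<alpha>_def \<beta>_def)
qed

lemma cinner_col_self_adjoint:
  assumes R: "R \<in> carrier_mat N N" "adj R = R" and \<rho>: "\<rho> \<in> carrier_mat N N" and b: "b < N"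
  shows "cinner (col R b) (\<rho> *\<^sub>v col R b) = (R * \<rho> * R) $$ (b, b)"
proof -
  have "cinner (col R b) (\<rho> *\<^sub>v col R b) =
      (\<Sum>i<N. \<Sum>a<N. cnj (R $$ (i, b)) * \<rho> $$ (i, a) * R $$ (a, b))"
    using cinner_mult_mat_vec[of "col R b" N _ \<rho>] R \<rho> b by simp
  also have "\<dots> = (\<Sum>i<N. \<Sum>a<N. R $$ (b, i) * \<rho> $$ (i, a) * R $$ (a, b))"
    using b R by (intro sum.cong refl) (simp add: index_self_adjoint[of R N b])
  also have "\<dots> = (R * (\<rho> * R)) $$ (b, b)"
    using R \<rho> b by (simp add: scalar_prod_def lessThan_atLeast0 sum_distrib_left mult.assoc)
  also have "\<dots> = (R * \<rho> * R) $$ (b, b)"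
    using R \<rho> by simp
  finally show ?thesis .
qed

lemma orth_projector_trace_zero_cinner_col:
  assumes psd: "positive_semidef N \<rho>" and R: "orth_projector N R"
    and trace: "mtrace (R * \<rho>) = 0" and b: "b < N"
  shows "cinner (col R b) (\<rho> *\<^sub>v col R b) = 0"
proof -
  have \<rho>: "\<rho> \<in> carrier_mat N N" using psd by (simp add: positive_semidef_def)
  have Rc: "R \<in> carrier_mat N N" and idem: "R * R = R" and adj: "adj R = R"
    using R by (auto simp: orth_projector_def)
  define q where "q c = cinner (col R c) (\<rho> *\<^sub>v col R c)" for c
  have q_nonneg: "Im (q c) = 0 \<and> 0 \<le> Re (q c)" for c
    using psd Rc by (auto simp: positive_semidef_def q_def)
  have "mtrace (R * \<rho>) = mtrace (R * (R * \<rho>))"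
    using idem Rc \<rho> by (simp add: assoc_mult_mat[of R N N R N \<rho> N, symmetric])
  also have "\<dots> = mtrace (R * \<rho> * R)"
    using Rc \<rho> by (intro mtrace_mult_commute[of _ N]) auto
  also have "\<dots> = (\<Sum>c<N. q c)"
    using Rc \<rho> by (simp add: mtrace_def q_def cinner_col_self_adjoint[OF Rc adj \<rho>])
  finally have "(\<Sum>c<N. Re (q c)) = 0" using trace by (metis Re_sum zero_complex.sel(1))
  then have "Re (q b) = 0" using q_nonneg b by (subst (asm) sum_nonneg_eq_0_iff) auto
  then show ?thesis using q_nonneg[of b] by (simp add: q_def complex_eq_iff)
qed

lemma orth_projector_trace_zero:
  assumes psd: "positive_semidef N \<rho>" and R: "orth_projector N R" and trace: "mtrace (R * \<rho>) = 0"
  shows "R * \<rho> = 0\<^sub>m N N" and "\<rho> * R = 0\<^sub>m N N"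
proof -
  have \<rho>: "\<rho> \<in> carrier_mat N N" using psd by (simp add: positive_semidef_def)
  have Rc: "R \<in> carrier_mat N N" and adj: "adj R = R"
    using R by (auto simp: orth_projector_def)
  have kernel: "cinner w (\<rho> *\<^sub>v col R b) = 0" "cinner (col R b) (\<rho> *\<^sub>v w) = 0"
    if "b < N" "w \<in> carrier_vec N" for b w
    using positive_semidef_cinner_zero[OF psd _ that(2)
        orth_projector_trace_zero_cinner_col[OF psd R trace that(1)]] Rc by auto
  show "R * \<rho> = 0\<^sub>m N N"
  proof (rule eq_matI)
    fix b c assume "b < dim_row (0\<^sub>m N N :: complex mat)" "c < dim_col (0\<^sub>m N N :: complex mat)"
    then have b: "b < N" and c: "c < N" by auto
    have "(R * \<rho>) $$ (b, c) = (\<Sum>i<N. R $$ (b, i) * \<rho> $$ (i, c))"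
      using Rc \<rho> b c by (simp add: scalar_prod_def lessThan_atLeast0)
    also have "\<dots> = cinner (col R b) (\<rho> *\<^sub>v unit_vec N c)"
      unfolding cinner_def using Rc \<rho> b c
      by (intro sum.cong) (auto simp: index_self_adjoint[OF Rc adj, of b])
    also have "\<dots> = 0" using kernel(2)[OF b, of "unit_vec N c"] by simp
    finally show "(R * \<rho>) $$ (b, c) = 0\<^sub>m N N $$ (b, c)" using b c by simp
  qed (use Rc \<rho> in auto)
  show "\<rho> * R = 0\<^sub>m N N"
  proof (rule eq_matI)
    fix i b assume "i < dim_row (0\<^sub>m N N :: complex mat)" "b < dim_col (0\<^sub>m N N :: complex mat)"
    then have i: "i < N" and b: "b < N" by auto
    have "(\<rho> * R) $$ (i, b) = cinner (unit_vec N i) (\<rho> *\<^sub>v col R b)"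
      using Rc \<rho> i b by (simp add: cinner_unit_vec)
    also have "\<dots> = 0" using kernel(1)[OF b, of "unit_vec N i"] i by simp
    finally show "(\<rho> * R) $$ (i, b) = 0\<^sub>m N N $$ (i, b)" using i b by simp
  qed (use Rc \<rho> in auto)
qed

lemma orth_projector_trace_one:
  assumes \<rho>: "density_op N \<rho>" and Q: "orth_projector N Q" and trace: "mtrace (Q * \<rho>) = 1"
  shows "Q * \<rho> = \<rho>" and "\<rho> * Q = \<rho>"
proof -
  have psd: "positive_semidef N \<rho>" and tr: "mtrace \<rho> = 1"
    using \<rho> by (auto simp: density_op_def)
  have \<rho>c: "\<rho> \<in> carrier_mat N N" using psd by (simp add: positive_semidef_def)
  have Qc: "Q \<in> carrier_mat N N" using Q by (simp add: orth_projector_def)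
  have left: "(1\<^sub>m N - Q) * \<rho> = \<rho> - Q * \<rho>"
    using Qc \<rho>c by (subst minus_mult_distrib_mat[of _ N N]) auto
  have right: "\<rho> * (1\<^sub>m N - Q) = \<rho> - \<rho> * Q"
    using Qc \<rho>c by (subst mult_minus_distrib_mat[of _ N N]) auto
  have "mtrace ((1\<^sub>m N - Q) * \<rho>) = 0"
    unfolding left using trace tr Qc \<rho>c by (simp add: mtrace_minus[of _ N])
  note zero = orth_projector_trace_zero[OF psd orth_projector_one_minus[OF Q] this]
  have "\<rho> - Q * \<rho> = 0\<^sub>m N N" using zero(1) by (simp only: left)
  then have "\<rho> = Q * \<rho>" using minus_mat_eq_zero_imp_eq[of \<rho> N "Q * \<rho>"] Qc \<rho>c by simp
  then show "Q * \<rho> = \<rho>" ..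
  have "\<rho> - \<rho> * Q = 0\<^sub>m N N" using zero(2) by (simp only: right)
  then have "\<rho> = \<rho> * Q" using minus_mat_eq_zero_imp_eq[of \<rho> N "\<rho> * Q"] Qc \<rho>c by simp
  then show "\<rho> * Q = \<rho>" ..
qed

lemma orth_projector_trace_one_iff:
  assumes \<rho>: "density_op N \<rho>" and Q: "orth_projector N Q"
  shows "mtrace (Q * \<rho>) = 1 \<longleftrightarrow> Q * \<rho> * Q = Q * \<rho> \<and> Q * \<rho> = \<rho>"
proof
  assume "mtrace (Q * \<rho>) = 1"
  note absorb = orth_projector_trace_one[OF \<rho> Q this]
  have "Q * \<rho> * Q = Q * (\<rho> * Q)"
    using Q \<rho> by (intro assoc_mult_mat[of _ N N _ N _ N])
      (auto simp: orth_projector_def density_op_def positive_semidef_def)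
  with absorb show "Q * \<rho> * Q = Q * \<rho> \<and> Q * \<rho> = \<rho>" by simp
qed (use \<rho> in \<open>simp add: density_op_def\<close>)

lemma orth_projector_trace_absorb:
  assumes psd: "positive_semidef N \<rho>" and A: "A \<in> carrier_mat N N" and B: "B \<in> carrier_mat N N"
    and R: "orth_projector N (B - A * B)" and trace: "mtrace (A * B * \<rho>) = mtrace (B * \<rho>)"
  shows "A * (B * \<rho>) = B * \<rho>"
proof -
  have \<rho>: "\<rho> \<in> carrier_mat N N" using psd by (simp add: positive_semidef_def)
  have diff: "(B - A * B) * \<rho> = B * \<rho> - A * B * \<rho>"
    using A B \<rho> by (subst minus_mult_distrib_mat[of _ N N]) auto
  have "mtrace ((B - A * B) * \<rho>) = 0"
    unfolding diff using A B \<rho> trace by (simp add: mtrace_minus[of _ N])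
  with diff orth_projector_trace_zero(1)[OF psd R] have "B * \<rho> - A * B * \<rho> = 0\<^sub>m N N" by simp
  then have "B * \<rho> = A * B * \<rho>"
    using minus_mat_eq_zero_imp_eq[of "B * \<rho>" N "A * B * \<rho>"] A B \<rho> by simp
  with A B \<rho> show ?thesis by simp
qed

section \<open>Projective measurements and the operator \<open>\<Pi>_sym\<close>\<close>

locale projective_measurement =
  fixes n :: nat and J :: "'j set" and P :: "'j \<Rightarrow> complex mat"
  assumes dim_pos: "0 < n"
    and finite_outcomes: "finite J"
    and projector: "j \<in> J \<Longrightarrow> orth_projector n (P j)"
    and orthogonal: "j \<in> J \<Longrightarrow> k \<in> J \<Longrightarrow> j \<noteq> k \<Longrightarrow> P j * P k = 0\<^sub>m n n"
    and complete: "mat_sum n P J = 1\<^sub>m n"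
begin

lemma projector_carrier: "j \<in> J \<Longrightarrow> P j \<in> carrier_mat n n"
  and projector_idem: "j \<in> J \<Longrightarrow> P j * P j = P j"
  and projector_adj: "j \<in> J \<Longrightarrow> adj (P j) = P j"
  using projector by (auto simp: orth_projector_def)

lemma tensor_pow_mult_tensor_pow:
  assumes m: "0 < m" and i: "i \<in> J" and j: "j \<in> J"
  shows "tensor_pow n m (P i) * tensor_pow n m (P j) =
    (if i = j then tensor_pow n m (P j) else 0\<^sub>m (n ^ m) (n ^ m))"
proof -
  have "tensor_pow n m (P i) * tensor_pow n m (P j) = tensor_prod n m (\<lambda>_. P i * P j)"
    unfolding tensor_pow_eq_tensor_prod
    using i j by (intro tensor_prod_mult[OF dim_pos]) (auto intro: projector_carrier)
  also have "\<dots> = (if i = j then tensor_pow n m (P j) else 0\<^sub>m (n ^ m) (n ^ m))"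
    using projector_idem[OF j] orthogonal[OF i j] m dim_pos
    by (auto simp: tensor_pow_eq_tensor_prod intro: tensor_prod_zero_factor[of _ 1])
  finally show ?thesis .
qed

lemma orth_projector_Pi_sym:
  assumes m: "0 < m"
  shows "orth_projector (n ^ m) (Pi_sym n m J P)"
proof -
  let ?T = "\<lambda>j. tensor_pow n m (P j)"
  have "?T i * Pi_sym n m J P = ?T i" if i: "i \<in> J" for i
  proof -
    have "?T i * Pi_sym n m J P = mat_sum (n ^ m) (\<lambda>j. ?T i * ?T j) J"
      unfolding Pi_sym_def by (rule mat_sum_mult_left) simp_all
    also have "\<dots> = mat_sum (n ^ m) (\<lambda>j. if j = i then ?T i else 0\<^sub>m (n ^ m) (n ^ m)) J"
      using tensor_pow_mult_tensor_pow[OF m i] by (intro mat_sum_cong) auto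
    also have "\<dots> = ?T i" by (rule mat_sum_delta[OF finite_outcomes i]) simp
    finally show ?thesis .
  qed
  then have "Pi_sym n m J P * Pi_sym n m J P = Pi_sym n m J P"
    unfolding Pi_sym_def[of n m J P] by (subst mat_sum_mult_right) (auto intro: mat_sum_cong)
  moreover have "adj (Pi_sym n m J P) = Pi_sym n m J P"
    unfolding Pi_sym_def tensor_pow_eq_tensor_prod
    by (subst adj_mat_sum) (auto simp: adj_tensor_prod[OF dim_pos] projector_carrier projector_adj
        intro!: mat_sum_cong)
  ultimately show ?thesis by (simp add: orth_projector_def Pi_sym_def)
qed

lemma embed_op_mult_tensor_pow:
  assumes k: "k \<in> {1..m}" and i: "i \<in> J" and j: "j \<in> J"
  shows "embed_op n m k (P j) * tensor_pow n m (P i) =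
    (if i = j then tensor_pow n m (P j) else 0\<^sub>m (n ^ m) (n ^ m))"
proof -
  have "embed_op n m k (P j) * tensor_pow n m (P i) =
      tensor_prod n m (\<lambda>l. (if l = k then P j else 1\<^sub>m n) * P i)"
    unfolding embed_op_eq_tensor_prod[OF dim_pos k] tensor_pow_eq_tensor_prod
    using i j by (intro tensor_prod_mult[OF dim_pos]) (auto intro: projector_carrier)
  also have "\<dots> = (if i = j then tensor_pow n m (P j) else 0\<^sub>m (n ^ m) (n ^ m))"
  proof (cases "i = j")
    case True
    then show ?thesis
      using projector_idem[OF j] projector_carrier[OF j]
      by (auto simp: tensor_pow_eq_tensor_prod intro: tensor_prod_cong)
  next
    case False
    then show ?thesis
      using tensor_prod_zero_factor[OF dim_pos k] orthogonal[OF j i] by auto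
  qed
  finally show ?thesis .
qed

lemma embed_op_mult_Pi_sym:
  assumes k: "k \<in> {1..m}" and j: "j \<in> J"
  shows "embed_op n m k (P j) * Pi_sym n m J P = tensor_pow n m (P j)"
proof -
  have "embed_op n m k (P j) * Pi_sym n m J P =
      mat_sum (n ^ m) (\<lambda>i. embed_op n m k (P j) * tensor_pow n m (P i)) J"
    unfolding Pi_sym_def by (rule mat_sum_mult_left) simp_all
  also have "\<dots> = mat_sum (n ^ m) (\<lambda>i. if i = j then tensor_pow n m (P j) else 0\<^sub>m (n ^ m) (n ^ m)) J"
    using embed_op_mult_tensor_pow[OF k _ j] by (intro mat_sum_cong) auto
  also have "\<dots> = tensor_pow n m (P j)" by (rule mat_sum_delta[OF finite_outcomes j]) simp
  finally show ?thesis .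
qed

text \<open>For \<open>k \<noteq> l\<close> the operator \<open>\<Pi>^(l) - \<Pi>^(k) \<Pi>^(l)\<close> is the tensor product with \<open>1 - \<Pi>\<close> in
  factor \<open>k\<close>, \<open>\<Pi>\<close> in factor \<open>l\<close> and \<open>1\<close> elsewhere.\<close>

lemma orth_projector_embed_op_diff:
  assumes k: "k \<in> {1..m}" and l: "l \<in> {1..m}" and "k \<noteq> l" and j: "j \<in> J"
  shows "orth_projector (n ^ m)
    (embed_op n m l (P j) - embed_op n m k (P j) * embed_op n m l (P j))"
proof -
  define Z where "Z i = (if i = l then P j else 1\<^sub>m n)" for i
  have Z: "Z i \<in> carrier_mat n n" for i using projector_carrier[OF j] by (simp add: Z_def)
  have El: "embed_op n m l (P j) = tensor_prod n m (Z(k := 1\<^sub>m n))"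
    unfolding embed_op_eq_tensor_prod[OF dim_pos l] Z_def using \<open>k \<noteq> l\<close>
    by (intro tensor_prod_cong) auto
  have "embed_op n m k (P j) * embed_op n m l (P j) = tensor_prod n m (\<lambda>i. (if i = k then P j else 1\<^sub>m n) * Z i)"
    unfolding embed_op_eq_tensor_prod[OF dim_pos k] embed_op_eq_tensor_prod[OF dim_pos l] Z_def
    using projector_carrier[OF j] by (intro tensor_prod_mult[OF dim_pos]) auto
  also have "\<dots> = tensor_prod n m (Z(k := P j))"
    using projector_carrier[OF j] \<open>k \<noteq> l\<close> by (intro tensor_prod_cong) (auto simp: Z_def)
  finally have "embed_op n m l (P j) - embed_op n m k (P j) * embed_op n m l (P j) =
      tensor_prod n m (Z(k := 1\<^sub>m n - P j))"
    unfolding El using projector_carrier[OF j] by (simp add: tensor_prod_fun_upd_diff[OF dim_pos k])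
  moreover have "orth_projector n ((Z(k := 1\<^sub>m n - P j)) i)" for i
    using projector[OF j] orth_projector_one_minus[OF projector[OF j]]
    by (auto simp: Z_def orth_projector_def)
  ultimately show ?thesis by (simp add: orth_projector_tensor_prod[OF dim_pos])
qed

lemma sigma_SMC_embed_op_absorb:
  assumes smc: "sigma_SMC n m J P \<rho>" and psd: "positive_semidef (n ^ m) \<rho>"
    and k: "k \<in> {1..m}" and l: "l \<in> {1..m}" and j: "j \<in> J"
  shows "embed_op n m k (P j) * (embed_op n m l (P j) * \<rho>) = embed_op n m l (P j) * \<rho>"
proof (cases "k = l")
  case True
  have \<rho>: "\<rho> \<in> carrier_mat (n ^ m) (n ^ m)" using psd by (simp add: positive_semidef_def)
  have "embed_op n m l (P j) * embed_op n m l (P j) = embed_op n m l (P j)"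
    using orth_projector_tensor_prod[OF dim_pos, of m "\<lambda>i. if i = l then P j else 1\<^sub>m n"]
      projector[OF j] embed_op_eq_tensor_prod[OF dim_pos l]
    by (simp add: orth_projector_def)
  with True \<rho> show ?thesis
    by (simp add: assoc_mult_mat[of _ "n ^ m" "n ^ m" _ "n ^ m" _ "n ^ m", symmetric])
next
  case False
  then show ?thesis
    using orth_projector_trace_absorb[OF psd _ _ orth_projector_embed_op_diff[OF k l False j]]
      smc k l j by (simp add: sigma_SMC_def)
qed

lemma sigma_SMC_tensor_pow_mult:
  assumes smc: "sigma_SMC n m J P \<rho>" and psd: "positive_semidef (n ^ m) \<rho>"
    and m: "0 < m" and j: "j \<in> J"
  shows "tensor_pow n m (P j) * \<rho> = embed_op n m 1 (P j) * \<rho>"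
proof -
  have \<rho>: "\<rho> \<in> carrier_mat (n ^ m) (n ^ m)" using psd by (simp add: positive_semidef_def)
  define F where "F r = tensor_prod n m (\<lambda>i. if i \<le> r then P j else 1\<^sub>m n)" for r
  have one: "1 \<in> {1..m}" using m by simp
  have "F r * \<rho> = embed_op n m 1 (P j) * \<rho>" if "1 \<le> r" "r \<le> m" for r
    using that
  proof (induction r rule: dec_induct)
    case base
    have "F 1 = embed_op n m 1 (P j)"
      unfolding F_def embed_op_eq_tensor_prod[OF dim_pos one] by (intro tensor_prod_cong) auto
    then show ?case by simp
  next
    case (step r)
    then have r: "Suc r \<in> {1..m}" by simp
    have "F (Suc r) = embed_op n m (Suc r) (P j) * F r"
      unfolding F_def embed_op_eq_tensor_prod[OF dim_pos r]
      using projector_carrier[OF j] projector_idem[OF j]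
      by (subst tensor_prod_mult[OF dim_pos]) (auto intro!: tensor_prod_cong)
    then have "F (Suc r) * \<rho> = embed_op n m (Suc r) (P j) * (F r * \<rho>)"
      using \<rho> by (simp add: F_def assoc_mult_mat[of _ "n ^ m" "n ^ m" _ "n ^ m" _ "n ^ m"])
    also have "\<dots> = embed_op n m 1 (P j) * \<rho>"
      using step sigma_SMC_embed_op_absorb[OF smc psd r one j] by simp
    finally show ?case .
  qed
  moreover have "tensor_pow n m (P j) = F m"
    unfolding F_def tensor_pow_eq_tensor_prod by (intro tensor_prod_cong) auto
  ultimately show ?thesis using m by simp
qed

lemma sigma_SMC_imp_Pi_sym_mult:
  assumes smc: "sigma_SMC n m J P \<rho>" and psd: "positive_semidef (n ^ m) \<rho>" and m: "0 < m"
  shows "Pi_sym n m J P * \<rho> = \<rho>"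
proof -
  have \<rho>: "\<rho> \<in> carrier_mat (n ^ m) (n ^ m)" using psd by (simp add: positive_semidef_def)
  have one: "1 \<in> {1..m}" using m by simp
  have "Pi_sym n m J P * \<rho> = mat_sum (n ^ m) (\<lambda>j. tensor_pow n m (P j) * \<rho>) J"
    unfolding Pi_sym_def by (rule mat_sum_mult_right[OF _ \<rho>]) simp
  also have "\<dots> = mat_sum (n ^ m) (\<lambda>j. embed_op n m 1 (P j) * \<rho>) J"
    by (intro mat_sum_cong sigma_SMC_tensor_pow_mult[OF smc psd m])
  also have "\<dots> = mat_sum (n ^ m) (\<lambda>j. embed_op n m 1 (P j)) J * \<rho>"
    by (rule mat_sum_mult_right[OF _ \<rho>, symmetric]) simp
  also have "mat_sum (n ^ m) (\<lambda>j. embed_op n m 1 (P j)) J = 1\<^sub>m (n ^ m)"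
    unfolding mat_sum_embed_op[OF dim_pos] complete by (rule embed_op_one[OF dim_pos one])
  finally show ?thesis using \<rho> by simp
qed

lemma Pi_sym_mult_imp_sigma_SMC:
  assumes \<rho>: "\<rho> \<in> carrier_mat (n ^ m) (n ^ m)" and absorb: "Pi_sym n m J P * \<rho> = \<rho>"
  shows "sigma_SMC n m J P \<rho>"
  unfolding sigma_SMC_def
proof (intro ballI)
  fix j k l assume j: "j \<in> J" and k: "k \<in> {1..m}" and l: "l \<in> {1..m}"
  let ?E = "\<lambda>k. embed_op n m k (P j)" and ?T = "tensor_pow n m (P j)"
  have "?E l * \<rho> = ?E l * (Pi_sym n m J P * \<rho>)" using absorb by simp
  also have "\<dots> = ?E l * Pi_sym n m J P * \<rho>"
    using \<rho> by (simp add: Pi_sym_def assoc_mult_mat[of _ "n ^ m" "n ^ m" _ "n ^ m" _ "n ^ m"])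
  finally have El: "?E l * \<rho> = ?T * \<rho>" by (simp add: embed_op_mult_Pi_sym[OF l j])
  have "?E k * ?E l * \<rho> = ?E k * ?T * \<rho>"
    using El \<rho> by (simp add: assoc_mult_mat[of _ "n ^ m" "n ^ m" _ "n ^ m" _ "n ^ m"])
  also have "?E k * ?T = ?T"
    using embed_op_mult_tensor_pow[OF k j j] by simp
  finally show "mtrace (?E k * ?E l * \<rho>) = mtrace (?E l * \<rho>)" using El by simp
qed

lemma sigma_SMC_iff_trace_Pi_sym:
  assumes \<rho>: "density_op (n ^ m) \<rho>" and m: "0 < m"
  shows "sigma_SMC n m J P \<rho> \<longleftrightarrow> mtrace (Pi_sym n m J P * \<rho>) = 1"
proof
  have psd: "positive_semidef (n ^ m) \<rho>" using \<rho> by (simp add: density_op_def)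
  then have \<rho>c: "\<rho> \<in> carrier_mat (n ^ m) (n ^ m)" by (simp add: positive_semidef_def)
  show "mtrace (Pi_sym n m J P * \<rho>) = 1" if "sigma_SMC n m J P \<rho>"
    using sigma_SMC_imp_Pi_sym_mult[OF that psd m] \<rho> by (simp add: density_op_def)
  show "sigma_SMC n m J P \<rho>" if "mtrace (Pi_sym n m J P * \<rho>) = 1"
    using orth_projector_trace_one(1)[OF \<rho> orth_projector_Pi_sym[OF m] that]
    by (rule Pi_sym_mult_imp_sigma_SMC[OF \<rho>c])
qed

end

lemma spectral_decomp_projective_measurement:
  assumes "0 < n" "spectral_decomp n \<sigma> J s P"
  shows "projective_measurement n J P"
  using assms by unfold_locales (auto simp: spectral_decomp_def)

text \<open>Only the spectral projectors of \<open>\<sigma>\<close> enter.\<close>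

theorem proposition4:
  fixes n m :: nat and \<sigma> \<rho> :: "complex mat" and J :: "'j set"
    and s :: "'j \<Rightarrow> real" and P :: "'j \<Rightarrow> complex mat"
  assumes "n \<ge> 2" and "m \<ge> 2"
    and "self_adjoint n \<sigma>"
    and "spectral_decomp n \<sigma> J s P"
    and "density_op (n ^ m) \<rho>"
  shows "(sigma_SMC n m J P \<rho> \<longleftrightarrow> mtrace (Pi_sym n m J P * \<rho>) = 1)
       \<and> (mtrace (Pi_sym n m J P * \<rho>) = 1 \<longleftrightarrow>
            (Pi_sym n m J P * \<rho> * Pi_sym n m J P = Pi_sym n m J P * \<rho>
             \<and> Pi_sym n m J P * \<rho> = \<rho>))"
proof -
  have m: "0 < m" using \<open>m \<ge> 2\<close> by simp
  interpret projective_measurement n J P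
    by (rule spectral_decomp_projective_measurement[OF _ assms(4)]) (use assms(1) in simp)
  show ?thesis
    using sigma_SMC_iff_trace_Pi_sym[OF assms(5) m]
      orth_projector_trace_one_iff[OF assms(5) orth_projector_Pi_sym[OF m]]
    by blast
qed

end
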